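(* Let $N\ge1$. (a) For a proper layered colored planar tree $T$, the breadth-first order $\ll$ coincides with the order $\prec_r$ on the set of non-degenerate vertices of $T$ if and only if $T$ is simple and order reduced (i.e. $T\in\mathbf{OST}$). (b) For every $j\in\langle N\rangle$ and word $u$, the contraction map $\rho$ is a bijection of $\mathbf{OST}_u^j$ onto $\mathbf{RT}_u^j$. (c) If $T\in\mathbf{RT}_u^j$ and $T'$ is the unique tree in $\mathbf{OST}_u^j$ with $\rho(T')=T$, then $\Omega(T')=\Lambda_{\uparrow r}(T)$ and $\ell(T')=\mathbf v(T)$.
   Context: Let $\langle N\rangle=\{1,\dots,N\}$. $\mathcal H^N$ denotes the free unital associative complex algebra on symbols $Y_u^i$ ($i\in\langle N\rangle$, $u$ a word over $\langle N\rangle$ of length $\ge2$), with the convention $Y_j^i=\delta_{ij}1$ for letters $i,j$. Trees: a colored planar tree is a finite rooted tree with linearly ordered children at each vertex and colors $c(x)\in\langle N\rangle$ on vertices such that if $x$ has exactly one child $y$ then $c(y)=c(x)$; trees are up to isomorphism. Root at level $0$, children of level-$k$ vertices at level $k+1$; vertices of a level are ordered left to right (by parents, then among siblings). Leaf: no children; unary: exactly one child; non-degenerate: at least two children. Layered: all leaves on the same level $h$, and $\ell(T)=h$ is the number of layers. Proper: every level $k<h$ contains a non-degenerate vertex. Simple: each level contains at most one non-degenerate vertex. A layered tree is order contractible at a non-degenerate non-root vertex $x$ on level $k$ if its parent $x'$ is unary, no non-degenerate vertex lies to the right of $x$ on level $k$, and no non-degenerate vertex lies to the left of $x'$ on level $k-1$;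 it is order reduced if it is order contractible at no vertex. $\mathbf{OST}_u^j$: proper simple order reduced layered colored planar trees with root colored $j$ and leaves colored (left to right) by $u$. A tree is reduced if it has no unary vertices; $\mathbf{RT}_u^j$: reduced colored planar trees with root colored $j$ and leaves colored (left to right) by $u$. The contraction $\rho(T)$ of a tree $T$ is obtained by contracting every edge from a unary vertex to its child (identifying the two, which have the same color); the non-degenerate vertices of $T$ are thereby identified with the non-leaf vertices of $\rho(T)$. Orders: $x\ll y$ iff $x$ is on a deeper level than $y$, or on the same level and to the left of $y$. $x\prec_r y$ iff $y$ is a proper ancestor of $x$, or, with $z$ the nearest common ancestor of $x,y$, the child of $z$ towards $x$ is to the right of the child of $z$ towards $y$. For a non-leaf $x$ with children $y_1<\dots<y_k$, $Y(x)=Y^{c(x)}_{c(y_1)\cdots c(y_k)}$. $\Omega(T')=\prod Y(x)$ over the non-degenerate vertices of $T'$ in increasing $\ll$ order; $\Lambda_{\uparrow r}(T)=\prod Y(x)$ over the non-leaf vertices of $T$ in increasing $\prec_r$ order; $\mathbf v(T)$ is the number of non-leaf vertices of $T$. *)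

theory Defs
  imports Main Complex_Main
begin

text \<open>A colored planar tree: each node carries a color and an ordered list of children.
  Datatype equality is exactly isomorphism of planar rooted trees.\<close>
datatype ctree = Node nat "ctree list"

fun col :: "ctree \<Rightarrow> nat" where "col (Node c ts) = c"
fun kids :: "ctree \<Rightarrow> ctree list" where "kids (Node c ts) = ts"

text \<open>Vertices are addressed by paths of child indices from the root.\<close>
fun valid :: "ctree \<Rightarrow> nat list \<Rightarrow> bool" where
  "valid t [] = True"
| "valid (Node c ts) (i # p) = (i < length ts \<and> valid (ts ! i) p)"

fun sub :: "ctree \<Rightarrow> nat list \<Rightarrow> ctree" where
  "sub t [] = t"
| "sub (Node c ts) (i # p) = sub (ts ! i) p"

definition verts :: "ctree \<Rightarrow> nat list set" where
  "verts t = {p. valid t p}"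

definition vcol :: "ctree \<Rightarrow> nat list \<Rightarrow> nat" where
  "vcol t p = col (sub t p)"

definition nkids :: "ctree \<Rightarrow> nat list \<Rightarrow> nat" where
  "nkids t p = length (kids (sub t p))"

definition is_leaf :: "ctree \<Rightarrow> nat list \<Rightarrow> bool" where
  "is_leaf t p \<longleftrightarrow> nkids t p = 0"

definition unary :: "ctree \<Rightarrow> nat list \<Rightarrow> bool" where
  "unary t p \<longleftrightarrow> nkids t p = 1"

definition nondeg :: "ctree \<Rightarrow> nat list \<Rightarrow> bool" where
  "nondeg t p \<longleftrightarrow> nkids t p \<ge> 2"

definition colored :: "nat \<Rightarrow> ctree \<Rightarrow> bool" where
  "colored N t \<longleftrightarrow> (\<forall>p\<in>verts t. vcol t p \<in> {1..N}) \<and>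
     (\<forall>p\<in>verts t. unary t p \<longrightarrow> vcol t (p @ [0]) = vcol t p)"

fun leafword :: "ctree \<Rightarrow> nat list" where
  "leafword (Node c ts) = (if ts = [] then [c] else concat (map leafword ts))"

fun height :: "ctree \<Rightarrow> nat" where
  "height (Node c ts) = (if ts = [] then 0 else Suc (fold max (map height ts) 0))"

text \<open>Level of a vertex = length of its path. \<open>left_of x y\<close>: x and y on the same level
  and x strictly to the left of y (ordered by parents, then among siblings).\<close>
definition left_of :: "nat list \<Rightarrow> nat list \<Rightarrow> bool" where
  "left_of x y \<longleftrightarrow> length x = length y \<and>
     (\<exists>a i j b c. x = a @ i # b \<and> y = a @ j # c \<and> i < j)"

definition layered :: "ctree \<Rightarrow> bool" where
  "layered t \<longleftrightarrow> (\<forall>p\<in>verts t. is_leaf t p \<longrightarrow> length p = height t)"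

text \<open>Number of layers \<open>\<ell>(T)\<close> (level of the leaves of a layered tree).\<close>
definition nlayers :: "ctree \<Rightarrow> nat" where
  "nlayers t = height t"

definition proper :: "ctree \<Rightarrow> bool" where
  "proper t \<longleftrightarrow> (\<forall>k < nlayers t. \<exists>p\<in>verts t. length p = k \<and> nondeg t p)"

definition simple :: "ctree \<Rightarrow> bool" where
  "simple t \<longleftrightarrow> (\<forall>p\<in>verts t. \<forall>q\<in>verts t.
      nondeg t p \<and> nondeg t q \<and> length p = length q \<longrightarrow> p = q)"

definition order_contractible_at :: "ctree \<Rightarrow> nat list \<Rightarrow> bool" where
  "order_contractible_at t x \<longleftrightarrow> x \<in> verts t \<and> x \<noteq> [] \<and> nondeg t x \<and>
     unary t (butlast x) \<and>
     \<not> (\<exists>y\<in>verts t. nondeg t y \<and> left_of x y) \<and>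
     \<not> (\<exists>y\<in>verts t. nondeg t y \<and> left_of y (butlast x))"

definition order_reduced :: "ctree \<Rightarrow> bool" where
  "order_reduced t \<longleftrightarrow> (\<forall>x. \<not> order_contractible_at t x)"

definition reduced :: "ctree \<Rightarrow> bool" where
  "reduced t \<longleftrightarrow> (\<forall>p\<in>verts t. \<not> unary t p)"

definition OST :: "nat \<Rightarrow> nat list \<Rightarrow> nat \<Rightarrow> ctree set" where
  "OST N u j = {t. colored N t \<and> layered t \<and> proper t \<and> simple t \<and> order_reduced t \<and>
                   col t = j \<and> leafword t = u}"

definition RT :: "nat \<Rightarrow> nat list \<Rightarrow> nat \<Rightarrow> ctree set" where
  "RT N u j = {t. colored N t \<and> reduced t \<and> col t = j \<and> leafword t = u}"

fun contract :: "ctree \<Rightarrow> ctree" where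
  "contract (Node c [t]) = contract t"
| "contract (Node c ts) = Node c (map contract ts)"

definition bfs_less :: "nat list \<Rightarrow> nat list \<Rightarrow> bool" where
  "bfs_less x y \<longleftrightarrow> length x > length y \<or> left_of x y"

definition r_less :: "nat list \<Rightarrow> nat list \<Rightarrow> bool" where
  "r_less x y \<longleftrightarrow> (\<exists>z. z \<noteq> [] \<and> x = y @ z) \<or>
     (\<exists>a i j b c. x = a @ i # b \<and> y = a @ j # c \<and> j < i)"

text \<open>Generator \<open>Y\<^sup>i\<^sub>u\<close> is represented by the pair \<open>(i,u)\<close>; monomials are lists of
  generators (free monoid), and elements of the free unital associative complex algebra
  are finitely supported complex functions on monomials, with convolution product.\<close>
type_synonym hmono = "(nat \<times> nat list) list"
type_synonym halg = "hmono \<Rightarrow> complex"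

definition hone :: halg where "hone w = (if w = [] then 1 else 0)"

definition hmult :: "halg \<Rightarrow> halg \<Rightarrow> halg" where
  "hmult f g w = (\<Sum>k\<le>length w. f (take k w) * g (drop k w))"

definition hprod :: "halg list \<Rightarrow> halg" where
  "hprod xs = foldr hmult xs hone"

text \<open>\<open>Y\<^sup>i\<^sub>u\<close> with the convention \<open>Y\<^sup>i\<^sub>j = \<delta>\<^sub>i\<^sub>j 1\<close> for letters.\<close>
definition Ygen :: "nat \<Rightarrow> nat list \<Rightarrow> halg" where
  "Ygen i u = (if length u \<ge> 2 then (\<lambda>w. if w = [(i, u)] then 1 else 0)
               else if u = [i] then hone else (\<lambda>w. 0))"

definition Yv :: "ctree \<Rightarrow> nat list \<Rightarrow> halg" where
  "Yv t x = Ygen (vcol t x) (map col (kids (sub t x)))"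

definition Omega :: "ctree \<Rightarrow> halg" where
  "Omega t = hprod (map (Yv t)
     (THE xs. sorted_wrt bfs_less xs \<and> set xs = {x\<in>verts t. nondeg t x}))"

definition Lambda_r :: "ctree \<Rightarrow> halg" where
  "Lambda_r t = hprod (map (Yv t)
     (THE xs. sorted_wrt r_less xs \<and> set xs = {x\<in>verts t. \<not> is_leaf t x}))"

definition nv :: "ctree \<Rightarrow> nat" where
  "nv t = card {x\<in>verts t. \<not> is_leaf t x}"

end

theory Submission
  imports Defs "HOL-Library.List_Lexorder"
begin

text \<open>Vertices are paths of child indices; then \<open>x \<prec>\<^sub>r y\<close> says that \<open>y\<close> is
  lexicographically smaller than \<open>x\<close>, while \<open>\<ll>\<close> compares depth first. In a simple order
  reduced tree a non-degenerate vertex is lexicographically larger than every shallower one: its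
  parent, if non-degenerate, and otherwise the non-degenerate vertex left of its unary parent
  supplied by order reducedness, is lexicographically smaller and one level up, so induction on
  depth applies. Conversely, if the orders coincide, a vertex at which the tree is order
  contractible would lie lexicographically below the non-degenerate vertex one level up that
  properness provides.

  So in a tree of \<open>OST\<close> the non-degenerate vertices, in lexicographic order, occupy the levels
  \<open>0, 1, 2, \<dots>\<close> one each. Contraction maps them monotonically onto the inner vertices of
  \<open>\<rho>(T)\<close>, so the level of each is the lexicographic rank of its image. Hence the tree is
  recovered from \<open>\<rho>(T)\<close> by inserting unary vertices until every inner vertex sits on the level
  given by its rank, and this expansion inverts \<open>\<rho>\<close> on reduced trees. Both \<open>\<Omega>\<close> and
  \<open>\<Lambda>\<^sub>\<uparrow>\<^sub>r\<close> then multiply the same generators in decreasing lexicographic order, and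
  the number of layers is the number of non-degenerate vertices.\<close>

section \<open>Paths and the lexicographic order\<close>

lemma r_less_iff_less: "r_less x y \<longleftrightarrow> y < x"
  unfolding r_less_def list_less_def lexord_def
  by (auto simp: neq_Nil_conv) blast+

lemma left_of_iff_less: "left_of x y \<longleftrightarrow> length x = length y \<and> x < y"
  unfolding left_of_def list_less_def lexord_def by (auto; blast)

lemma bfs_less_iff_less: "bfs_less x y \<longleftrightarrow> length y < length x \<or> length x = length y \<and> x < y"
  by (auto simp: bfs_less_def left_of_iff_less)

lemma less_append_nonempty: "z \<noteq> [] \<Longrightarrow> (x::'a::linorder list) < x @ z"
  by (auto simp: list_less_def neq_Nil_conv intro: lexord_append_rightI)

lemma append_less_append_same_length:
  fixes x y :: "'a::linorder list"
  assumes "x < y" "length x = length y"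
  shows "x @ u < y @ v"
  using assms lexord_sufI[of x y _ u v] by (simp add: list_less_def)

lemma two_le_length_iff: "2 \<le> length xs \<longleftrightarrow> xs \<noteq> [] \<and> length xs \<noteq> 1"
  by (cases xs) (auto simp: Suc_le_eq)

lemma nkids_simps [simp]:
  "nkids (Node c ts) [] = length ts" "nkids (Node c ts) (i # p) = nkids (ts ! i) p"
  by (simp_all add: nkids_def)

lemma vcol_simps [simp]:
  "vcol (Node c ts) [] = c" "vcol (Node c ts) (i # p) = vcol (ts ! i) p"
  by (simp_all add: vcol_def)

lemma unary_simps [simp]:
  "unary (Node c ts) [] \<longleftrightarrow> length ts = 1" "unary (Node c ts) (i # p) \<longleftrightarrow> unary (ts ! i) p"
  by (simp_all add: unary_def)

lemma nondeg_simps [simp]: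
  "nondeg (Node c ts) [] \<longleftrightarrow> 2 \<le> length ts" "nondeg (Node c ts) (i # p) \<longleftrightarrow> nondeg (ts ! i) p"
  by (simp_all add: nondeg_def)

lemma is_leaf_simps [simp]:
  "is_leaf (Node c ts) [] \<longleftrightarrow> ts = []" "is_leaf (Node c ts) (i # p) \<longleftrightarrow> is_leaf (ts ! i) p"
  by (simp_all add: is_leaf_def)

lemma is_leaf_iff_kids: "is_leaf t p \<longleftrightarrow> kids (sub t p) = []"
  by (simp add: is_leaf_def nkids_def)

lemma nondeg_iff_kids: "nondeg t p \<longleftrightarrow> 2 \<le> length (kids (sub t p))"
  by (simp add: nondeg_def nkids_def)

lemma nondeg_not_leaf: "nondeg t p \<Longrightarrow> \<not> is_leaf t p"
  and nondeg_not_unary: "nondeg t p \<Longrightarrow> \<not> unary t p"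
  by (simp_all add: nondeg_def is_leaf_def unary_def)

lemma unary_if_not_leaf_nondeg: "\<not> is_leaf t p \<Longrightarrow> \<not> nondeg t p \<Longrightarrow> unary t p"
  by (simp add: nondeg_def is_leaf_def unary_def)

lemma valid_Nil [simp]: "valid t []"
  by (cases t) simp_all

lemma verts_Nil [simp]: "[] \<in> verts t"
  and verts_Cons [simp]: "i # p \<in> verts (Node c ts) \<longleftrightarrow> i < length ts \<and> p \<in> verts (ts ! i)"
  by (simp_all add: verts_def)

lemma ball_verts_Node:
  "(\<forall>p\<in>verts (Node c ts). P p) \<longleftrightarrow> P [] \<and> (\<forall>i<length ts. \<forall>p\<in>verts (ts ! i). P (i # p))"
  by (auto simp: neq_Nil_conv) (metis list.exhaust verts_Cons)

lemma valid_append: "valid t (p @ q) \<longleftrightarrow> valid t p \<and> valid (sub t p) q"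
  by (induction p arbitrary: t) (auto elim: valid.elims)

lemma finite_verts: "finite (verts t)"
proof (induction t)
  case (Node c ts)
  have "verts (Node c ts) \<subseteq> insert [] (\<Union>i<length ts. (#) i ` verts (ts ! i))"
  proof
    fix p assume "p \<in> verts (Node c ts)"
    then show "p \<in> insert [] (\<Union>i<length ts. (#) i ` verts (ts ! i))"
      by (cases p) auto
  qed
  then show ?case
    by (rule finite_subset) (use Node in auto)
qed

definition inner_verts :: "ctree \<Rightarrow> nat list set" where
  "inner_verts t = {p\<in>verts t. \<not> is_leaf t p}"

definition nondeg_verts :: "ctree \<Rightarrow> nat list set" where
  "nondeg_verts t = {p\<in>verts t. nondeg t p}"

lemma finite_inner_verts: "finite (inner_verts t)"
  and finite_nondeg_verts: "finite (nondeg_verts t)"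
  using finite_verts by (simp_all add: inner_verts_def nondeg_verts_def)

lemma nondeg_verts_subset_inner_verts: "nondeg_verts t \<subseteq> inner_verts t"
  by (auto simp: nondeg_verts_def inner_verts_def nondeg_not_leaf)

lemma nv_eq_card_inner_verts: "nv t = card (inner_verts t)"
  by (simp add: nv_def inner_verts_def)

lemma inner_verts_Node [simp]:
  "[] \<in> inner_verts (Node c ts) \<longleftrightarrow> ts \<noteq> []"
  "i # p \<in> inner_verts (Node c ts) \<longleftrightarrow> i < length ts \<and> p \<in> inner_verts (ts ! i)"
  by (auto simp: inner_verts_def)

lemma nondeg_verts_Node [simp]:
  "[] \<in> nondeg_verts (Node c ts) \<longleftrightarrow> 2 \<le> length ts"
  "i # p \<in> nondeg_verts (Node c ts) \<longleftrightarrow> i < length ts \<and> p \<in> nondeg_verts (ts ! i)"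
  by (auto simp: nondeg_verts_def)

lemma prefix_in_inner_verts: "p @ q \<in> verts t \<Longrightarrow> q \<noteq> [] \<Longrightarrow> p \<in> inner_verts t"
  by (cases "sub t p"; cases q)
     (auto simp: verts_def inner_verts_def valid_append is_leaf_iff_kids)

lemma colored_Node:
  "colored N (Node c ts) \<longleftrightarrow> c \<in> {1..N} \<and> (length ts = 1 \<longrightarrow> col (ts ! 0) = c) \<and>
     (\<forall>t\<in>set ts. colored N t)"
  unfolding colored_def ball_verts_Node all_set_conv_all_nth by (auto simp: vcol_def)

lemma colored_sub: "colored N t \<Longrightarrow> valid t p \<Longrightarrow> colored N (sub t p)"
proof (induction p arbitrary: t)
  case (Cons i p)
  then show ?case by (cases t) (auto simp: colored_Node)
qed simp

lemma reduced_Node: "reduced (Node c ts) \<longleftrightarrow> length ts \<noteq> 1 \<and> (\<forall>t\<in>set ts. reduced t)"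
  unfolding reduced_def ball_verts_Node all_set_conv_all_nth by auto

definition leaves_at :: "nat \<Rightarrow> ctree \<Rightarrow> bool" where
  "leaves_at n t \<longleftrightarrow> (\<forall>p\<in>verts t. is_leaf t p \<longrightarrow> length p = n)"

lemma layered_iff_leaves_at_height: "layered t \<longleftrightarrow> leaves_at (height t) t"
  by (simp add: layered_def leaves_at_def)

lemma ex_leaf: "\<exists>p\<in>verts t. is_leaf t p"
proof (induction t)
  case (Node c ts)
  show ?case
  proof (cases ts)
    case (Cons s ss)
    with Node obtain q where "q \<in> verts s" "is_leaf s q" by auto
    with Cons show ?thesis by (intro bexI[of _ "0 # q"]) auto
  qed (auto intro: bexI[of _ "[]"])
qed

lemma leaves_at_Node:
  "leaves_at n (Node c ts) \<longleftrightarrow>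
     (if ts = [] then n = 0 else 0 < n \<and> (\<forall>t\<in>set ts. leaves_at (n - 1) t))"
proof (cases ts)
  case Nil
  then show ?thesis by (auto simp: leaves_at_def ball_verts_Node)
next
  case (Cons s ss)
  obtain q where "q \<in> verts s" "is_leaf s q" using ex_leaf by blast
  with Cons show ?thesis
    unfolding leaves_at_def ball_verts_Node all_set_conv_all_nth by force
qed

lemma height_if_leaves_at: "leaves_at n t \<Longrightarrow> height t = n"
proof (induction t arbitrary: n)
  case (Node c ts)
  show ?case
  proof (cases "ts = []")
    case False
    with Node have "set (map height ts) = {n - 1}" and "0 < n"
      by (auto simp: leaves_at_Node neq_Nil_conv)
    then have "fold max (map height ts) 0 = n - 1"
      using Max.set_eq_fold[of 0 "map height ts"] by simp
    with False \<open>0 < n\<close> show ?thesis by simp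
  qed (use Node.prems in \<open>simp add: leaves_at_Node\<close>)
qed

lemma layered_if_leaves_at: "leaves_at n t \<Longrightarrow> layered t \<and> height t = n"
  using height_if_leaves_at layered_iff_leaves_at_height by metis

lemma length_less_if_inner_vert: "leaves_at n t \<Longrightarrow> p \<in> inner_verts t \<Longrightarrow> length p < n"
proof (induction p arbitrary: t n)
  case Nil
  then show ?case by (cases t) (auto simp: inner_verts_def leaves_at_Node split: if_splits)
next
  case (Cons i p)
  obtain c ts where t: "t = Node c ts" by (cases t)
  with Cons.prems have "i < length ts" "p \<in> inner_verts (ts ! i)" "0 < n" "leaves_at (n - 1) (ts ! i)"
    by (auto simp: inner_verts_def leaves_at_Node split: if_splits)
  with Cons.IH show ?case by fastforce
qed

lemma contract_Node: "length ts \<noteq> 1 \<Longrightarrow> contract (Node c ts) = Node c (map contract ts)"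
  by (cases ts rule: remdups_adj.cases) auto

lemma col_contract: "colored N t \<Longrightarrow> col (contract t) = col t"
  by (induction t rule: contract.induct) (auto simp: colored_Node)

lemma colored_contract: "colored N t \<Longrightarrow> colored N (contract t)"
  by (induction t rule: contract.induct) (auto simp: colored_Node col_contract)

lemma reduced_contract: "reduced (contract t)"
  by (induction t rule: contract.induct) (auto simp: reduced_Node)

lemma leafword_contract: "leafword (contract t) = leafword t"
  by (induction t rule: contract.induct) (auto cong: map_cong)

fun contract_path :: "ctree \<Rightarrow> nat list \<Rightarrow> nat list" where
  "contract_path t [] = []"
| "contract_path (Node c ts) (i # p) =
     (if length ts = 1 then contract_path (ts ! i) p else i # contract_path (ts ! i) p)"

lemma sub_contract_path:
  "valid t p \<Longrightarrow> valid (contract t) (contract_path t p) \<and> sub (contract t) (contract_path t p) = contract (sub t p)"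
proof (induction p arbitrary: t)
  case (Cons i p)
  obtain c ts where t: "t = Node c ts" by (cases t)
  show ?case
  proof (cases "length ts = 1")
    case True
    then obtain s where "ts = [s]" by (cases ts) auto
    with Cons t show ?thesis by auto
  next
    case False
    with Cons t show ?thesis by (simp add: contract_Node)
  qed
qed simp

lemma contract_path_in_inner_verts:
  assumes "p \<in> nondeg_verts t"
  shows "contract_path t p \<in> inner_verts (contract t)"
proof -
  obtain c ks where s: "sub t p = Node c ks" by (cases "sub t p")
  with assms have "2 \<le> length ks" by (simp add: nondeg_verts_def nondeg_iff_kids)
  with assms s sub_contract_path[of t p] show ?thesis
    by (auto simp: nondeg_verts_def inner_verts_def verts_def is_leaf_iff_kids contract_Node)
qed

lemma inner_verts_contract_subset: "inner_verts (contract t) \<subseteq> contract_path t ` nondeg_verts t"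
proof (induction t)
  case (Node c ts)
  show ?case
  proof
    fix w assume w: "w \<in> inner_verts (contract (Node c ts))"
    show "w \<in> contract_path (Node c ts) ` nondeg_verts (Node c ts)"
    proof (cases "length ts = 1")
      case True
      then obtain s where ts: "ts = [s]" by (cases ts) auto
      with w Node.IH obtain p where "p \<in> nondeg_verts s" "w = contract_path s p" by auto
      with ts show ?thesis by (auto simp: nondeg_verts_def intro!: image_eqI[of _ _ "0 # p"])
    next
      case False
      show ?thesis
      proof (cases w)
        case Nil
        with w False have "2 \<le> length ts"
          by (auto simp: contract_Node two_le_length_iff)
        with Nil show ?thesis by (auto simp: nondeg_verts_def intro!: image_eqI[of _ _ "[]"])
      next
        case (Cons i w')
        with w False have "i < length ts" "w' \<in> inner_verts (contract (ts ! i))"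
          by (auto simp: inner_verts_def contract_Node)
        with Node.IH obtain p where "p \<in> nondeg_verts (ts ! i)" "w' = contract_path (ts ! i) p"
          by (meson image_iff nth_mem subsetD)
        with Cons False \<open>i < length ts\<close> show ?thesis
          by (auto simp: nondeg_verts_def intro!: image_eqI[of _ _ "i # p"])
      qed
    qed
  qed
qed

lemma contract_path_image: "contract_path t ` nondeg_verts t = inner_verts (contract t)"
  using contract_path_in_inner_verts inner_verts_contract_subset by blast

lemma strict_mono_on_contract_path: "strict_mono_on (nondeg_verts t) (contract_path t)"
proof (rule strict_mono_onI)
  show "p < q \<Longrightarrow> contract_path t p < contract_path t q"
    if "p \<in> nondeg_verts t" "q \<in> nondeg_verts t" for p q
    using that
  proof (induction t arbitrary: p q)
    case (Node c ts)
    show ?case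
    proof (cases "length ts = 1")
      case True
      then obtain s where ts: "ts = [s]" by (cases ts) auto
      with Node.prems obtain p' q' where "p = 0 # p'" "q = 0 # q'"
        by (cases p; cases q) (auto simp: nondeg_verts_def)
      with Node ts show ?thesis by (auto simp: nondeg_verts_def)
    next
      case False
      from Node.prems obtain j q' where q: "q = j # q'" by (cases q) auto
      show ?thesis
      proof (cases p)
        case (Cons i p')
        with Node q False show ?thesis by (auto simp: nondeg_verts_def)
      qed (use q False in simp)
    qed
  qed
qed

lemma card_nondeg_verts: "card (nondeg_verts t) = nv (contract t)"
  using card_image[OF strict_mono_on_imp_inj_on[OF strict_mono_on_contract_path]]
  by (simp add: contract_path_image nv_eq_card_inner_verts)

lemma Yv_contract_path:
  assumes "colored N t" "p \<in> nondeg_verts t"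
  shows "Yv (contract t) (contract_path t p) = Yv t p"
proof -
  obtain c ks where s: "sub t p = Node c ks" by (cases "sub t p")
  with assms have "2 \<le> length ks" by (simp add: nondeg_verts_def nondeg_iff_kids)
  moreover have cols: "map (col \<circ> contract) ks = map col ks"
    using colored_sub[of N t p] assms s
    by (auto simp: nondeg_verts_def verts_def colored_Node col_contract)
  ultimately show ?thesis
    using assms s sub_contract_path[of t p]
    by (simp add: Yv_def vcol_def contract_Node nondeg_verts_def verts_def cols)
qed

definition rank_in :: "'a::linorder set \<Rightarrow> 'a \<Rightarrow> nat" where
  "rank_in A x = card {y\<in>A. y < x}"

lemma strict_mono_on_rank_in: "finite A \<Longrightarrow> strict_mono_on A (rank_in A)"
  unfolding rank_in_def
  by (rule strict_mono_onI, rule psubset_card_mono) auto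

lemma rank_in_less_card: "finite A \<Longrightarrow> x \<in> A \<Longrightarrow> rank_in A x < card A"
  unfolding rank_in_def by (rule psubset_card_mono) auto

lemma rank_in_image: "finite A \<Longrightarrow> rank_in A ` A = {..<card A}"
  by (rule card_subset_eq)
     (auto simp: rank_in_less_card card_image strict_mono_on_imp_inj_on strict_mono_on_rank_in)

lemma rank_in_image_strict_mono:
  assumes "strict_mono_on A f" "x \<in> A"
  shows "rank_in (f ` A) (f x) = rank_in A x"
proof -
  have "{y\<in>f ` A. y < f x} = f ` {y\<in>A. y < x}"
    using assms strict_mono_on_less[OF assms(1)] by auto
  moreover have "inj_on f {y\<in>A. y < x}"
    using strict_mono_on_imp_inj_on[OF assms(1)] by (rule inj_on_subset) auto
  ultimately show ?thesis
    by (simp add: rank_in_def card_image)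
qed

lemma eq_rank_in_if_strict_mono:
  fixes f :: "'a::linorder \<Rightarrow> nat"
  assumes "strict_mono_on A f" "f ` A = {..<n}" "x \<in> A"
  shows "f x = rank_in A x"
proof -
  have "f x < n"
    using assms by auto
  then have "{y\<in>{..<n}. y < f x} = {..<f x}"
    by auto
  then show ?thesis
    using rank_in_image_strict_mono[OF assms(1,3)] assms(2) by (simp add: rank_in_def)
qed

section \<open>Coincidence of the two orders\<close>

definition orders_coincide :: "ctree \<Rightarrow> bool" where
  "orders_coincide t \<longleftrightarrow> (\<forall>x\<in>nondeg_verts t. \<forall>y\<in>nondeg_verts t. bfs_less x y \<longleftrightarrow> r_less x y)"

lemma simple_iff_inj_on_length: "simple t \<longleftrightarrow> inj_on length (nondeg_verts t)"
  by (auto simp: simple_def inj_on_def nondeg_verts_def)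

lemma simple_if_orders_coincide: "orders_coincide t \<Longrightarrow> simple t"
  unfolding simple_iff_inj_on_length
proof (rule inj_onI, rule ccontr)
  fix x y assume "orders_coincide t" "x \<in> nondeg_verts t" "y \<in> nondeg_verts t"
    and "length x = length y" "x \<noteq> y"
  then have "bfs_less x y \<longleftrightarrow> r_less x y"
    by (simp add: orders_coincide_def)
  with \<open>length x = length y\<close> have "x < y \<longleftrightarrow> y < x"
    by (simp add: bfs_less_iff_less r_less_iff_less)
  with \<open>x \<noteq> y\<close> show False
    using not_less_iff_gr_or_eq by blast
qed

lemma order_reduced_if_orders_coincide:
  assumes L: "layered t" and P: "proper t" and C: "orders_coincide t"
  shows "order_reduced t"
  unfolding order_reduced_def
proof (intro allI notI)
  fix x assume "order_contractible_at t x"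
  then have x: "x \<in> nondeg_verts t" "x \<noteq> []" "unary t (butlast x)"
    and no_left: "\<not> (\<exists>y\<in>verts t. nondeg t y \<and> left_of y (butlast x))"
    by (auto simp: order_contractible_at_def nondeg_verts_def)
  have "length x < height t"
    using L x nondeg_verts_subset_inner_verts
    by (auto simp: layered_iff_leaves_at_height intro: length_less_if_inner_vert)
  then have "length (butlast x) < nlayers t"
    by (simp add: nlayers_def)
  then obtain y where y: "y \<in> nondeg_verts t" "length y = length (butlast x)"
    using P by (auto simp: proper_def nondeg_verts_def)
  have "y \<noteq> butlast x"
    using x y nondeg_not_unary by (auto simp: nondeg_verts_def)
  moreover have "\<not> y < butlast x"
    using no_left y by (auto simp: left_of_iff_less nondeg_verts_def)
  ultimately have "butlast x < y" by auto
  then have "butlast x @ [last x] < y @ []"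
    using y by (intro append_less_append_same_length) auto
  then have "x < y" using x by simp
  moreover have "bfs_less x y"
    using x y by (simp add: bfs_less_iff_less)
  ultimately show False
    using C x y by (auto simp: orders_coincide_def r_less_iff_less)
qed

lemma nondeg_lex_less_on_level_above:
  assumes S: "simple t" and R: "order_reduced t" and x: "x \<in> nondeg_verts t" "x \<noteq> []"
  obtains z where "z \<in> nondeg_verts t" "length z = length x - 1" "z < x"
proof -
  define x' where "x' = butlast x"
  from x have "x = x' @ [last x]" by (simp add: x'_def)
  then have "x' < x" "x' \<in> inner_verts t"
    using x by (metis less_append_nonempty prefix_in_inner_verts mem_Collect_eq nondeg_verts_def
      not_Cons_self2)+
  show ?thesis
  proof (cases "nondeg t x'")
    case True
    show ?thesis
    proof (rule that)
      show "x' \<in> nondeg_verts t"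
        using True \<open>x' \<in> inner_verts t\<close> by (simp add: inner_verts_def nondeg_verts_def)
    qed (use \<open>x' < x\<close> in \<open>simp_all add: x'_def\<close>)
  next
    case False
    then have "unary t x'"
      using \<open>x' \<in> inner_verts t\<close> unary_if_not_leaf_nondeg by (auto simp: inner_verts_def)
    moreover have "\<not> order_contractible_at t x"
      using R by (simp add: order_reduced_def)
    moreover have "\<not> (\<exists>z\<in>verts t. nondeg t z \<and> left_of x z)"
      using S x by (auto simp: simple_def left_of_iff_less nondeg_verts_def)
    ultimately obtain z where "z \<in> nondeg_verts t" "length z = length x'" "z < x'"
      using x by (auto simp: order_contractible_at_def nondeg_verts_def left_of_iff_less x'_def)
    with that \<open>x' < x\<close> show ?thesis
      by (simp add: x'_def)
  qed
qed

lemma lex_less_if_deeper: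
  assumes S: "simple t" and R: "order_reduced t"
  shows "x \<in> nondeg_verts t \<Longrightarrow> y \<in> nondeg_verts t \<Longrightarrow> length y < length x \<Longrightarrow> y < x"
proof (induction "length x" arbitrary: x rule: less_induct)
  case less
  then obtain z where z: "z \<in> nondeg_verts t" "length z = length x - 1" "z < x"
    using nondeg_lex_less_on_level_above[OF S R] by (metis less_nat_zero_code list.size(3))
  show "y < x"
  proof (cases "length y = length z")
    case True
    with S z less.prems have "y = z"
      by (auto simp: simple_iff_inj_on_length inj_on_def)
    with z show ?thesis by simp
  next
    case False
    with less.prems z have "length y < length z" by linarith
    with less.hyps[of z] less.prems z show ?thesis by fastforce
  qed
qed

lemma orders_coincide_if_simple_order_reduced:
  assumes S: "simple t" and R: "order_reduced t"
  shows "orders_coincide t"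
  unfolding orders_coincide_def
proof (intro ballI)
  fix x y assume xy: "x \<in> nondeg_verts t" "y \<in> nondeg_verts t"
  consider "length x = length y" | "length y < length x" | "length x < length y" by linarith
  then show "bfs_less x y \<longleftrightarrow> r_less x y"
  proof cases
    case 1
    then have "x = y" using S xy by (auto simp: simple_iff_inj_on_length inj_on_def)
    then show ?thesis by (simp add: bfs_less_iff_less r_less_iff_less)
  next
    case 2
    then show ?thesis using lex_less_if_deeper[OF S R xy(1,2)] by (simp add: bfs_less_iff_less r_less_iff_less)
  next
    case 3
    then show ?thesis using lex_less_if_deeper[OF S R xy(2,1)] by (auto simp: bfs_less_iff_less r_less_iff_less)
  qed
qed

lemma orders_coincide_iff_simple_order_reduced:
  "layered t \<Longrightarrow> proper t \<Longrightarrow> orders_coincide t \<longleftrightarrow> simple t \<and> order_reduced t"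
  using simple_if_orders_coincide order_reduced_if_orders_coincide
    orders_coincide_if_simple_order_reduced by blast

definition levels_by_rank :: "ctree \<Rightarrow> bool" where
  "levels_by_rank t \<longleftrightarrow> height t = card (nondeg_verts t) \<and>
     (\<forall>p\<in>nondeg_verts t. length p = rank_in (nondeg_verts t) p)"

lemma levels_by_rank_if_orders_coincide:
  assumes L: "layered t" and P: "proper t" and C: "orders_coincide t"
  shows "levels_by_rank t"
proof -
  have S: "simple t" using C by (rule simple_if_orders_coincide)
  have mono: "strict_mono_on (nondeg_verts t) length"
  proof (rule strict_mono_onI)
    fix p q assume pq: "p \<in> nondeg_verts t" "q \<in> nondeg_verts t" "p < q"
    then have "bfs_less q p"
      using C by (simp add: orders_coincide_def r_less_iff_less)
    moreover have "length p \<noteq> length q"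
      using S pq by (auto simp: simple_iff_inj_on_length inj_on_def)
    ultimately show "length p < length q"
      by (simp add: bfs_less_iff_less)
  qed
  have "length ` nondeg_verts t = {..<height t}"
  proof
    show "length ` nondeg_verts t \<subseteq> {..<height t}"
      using L nondeg_verts_subset_inner_verts
      by (auto simp: layered_iff_leaves_at_height intro: length_less_if_inner_vert)
    show "{..<height t} \<subseteq> length ` nondeg_verts t"
      using P by (force simp: proper_def nlayers_def nondeg_verts_def)
  qed
  moreover have "card (length ` nondeg_verts t) = card (nondeg_verts t)"
    using S by (simp add: simple_iff_inj_on_length card_image)
  ultimately show ?thesis
    using eq_rank_in_if_strict_mono[OF mono] by (simp add: levels_by_rank_def)
qed

lemma proper_orders_coincide_if_levels_by_rank:
  assumes "levels_by_rank t"
  shows "proper t \<and> orders_coincide t"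
proof -
  have len: "\<forall>p\<in>nondeg_verts t. length p = rank_in (nondeg_verts t) p"
    and height: "height t = card (nondeg_verts t)"
    using assms by (simp_all add: levels_by_rank_def)
  have mono: "strict_mono_on (nondeg_verts t) length"
    using strict_mono_on_rank_in[OF finite_nondeg_verts] len
    by (simp add: strict_mono_on_def monotone_on_def)
  have "proper t"
    unfolding proper_def nlayers_def
  proof (intro allI impI)
    fix k assume "k < height t"
    then have "k \<in> rank_in (nondeg_verts t) ` nondeg_verts t"
      using height rank_in_image[OF finite_nondeg_verts] by simp
    then show "\<exists>p\<in>verts t. length p = k \<and> nondeg t p"
      using len by (auto simp: nondeg_verts_def)
  qed
  moreover have "orders_coincide t"
    unfolding orders_coincide_def
  proof (intro ballI)
    fix p q assume pq: "p \<in> nondeg_verts t" "q \<in> nondeg_verts t"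
    then have "length p = length q \<longrightarrow> p = q"
      using strict_mono_on_imp_inj_on[OF mono] by (auto dest: inj_onD)
    then show "bfs_less p q \<longleftrightarrow> r_less p q"
      using strict_mono_on_less[OF mono pq(2,1)] by (auto simp: bfs_less_iff_less r_less_iff_less)
  qed
  ultimately show ?thesis ..
qed

section \<open>Expanding a reduced tree\<close>

definition root_level :: "(nat list \<Rightarrow> nat) \<Rightarrow> nat \<Rightarrow> ctree \<Rightarrow> nat" where
  "root_level R h t = (if kids t = [] then h else R [])"

text \<open>\<open>expand R h k t\<close> places the root of \<open>t\<close> on level \<open>k\<close> and inserts unary vertices so
  that each inner vertex \<open>v\<close> of \<open>t\<close> lands on level \<open>R v\<close> and each leaf on level \<open>h\<close>.\<close>

function expand :: "(nat list \<Rightarrow> nat) \<Rightarrow> nat \<Rightarrow> nat \<Rightarrow> ctree \<Rightarrow> ctree" where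
  "expand R h k (Node c ts) =
     (if k < root_level R h (Node c ts) then Node c [expand R h (Suc k) (Node c ts)]
      else Node c (map (\<lambda>i. expand (R \<circ> (#) i) h (Suc k) (ts ! i)) [0..<length ts]))"
  by pat_completeness auto
termination
  by (relation "measures [\<lambda>(R, h, k, t). size t, \<lambda>(R, h, k, t). root_level R h t - k]")
     (auto simp: root_level_def less_Suc_eq_le intro!: size_list_estimation'[OF nth_mem])

declare expand.simps [simp del]

lemma expand_stretch:
  "k < root_level R h t \<Longrightarrow> expand R h k t = Node (col t) [expand R h (Suc k) t]"
  by (cases t) (simp add: expand.simps)

lemma expand_branch:
  "\<not> k < root_level R h (Node c ts) \<Longrightarrow>
     expand R h k (Node c ts) = Node c (map (\<lambda>i. expand (R \<circ> (#) i) h (Suc k) (ts ! i)) [0..<length ts])"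
  by (simp add: expand.simps)

lemma col_expand [simp]: "col (expand R h k t) = col t"
  by (cases t) (auto simp: expand.simps)

lemma contract_expand: "reduced t \<Longrightarrow> contract (expand R h k t) = t"
proof (induction R h k t rule: expand.induct)
  case (1 R h k c ts)
  show ?case
  proof (cases "k < root_level R h (Node c ts)")
    case True
    with 1 show ?thesis by (simp add: expand_stretch)
  next
    case False
    with 1 show ?thesis
      by (auto simp: expand_branch contract_Node reduced_Node comp_def intro: nth_equalityI)
  qed
qed

lemma colored_expand: "colored N t \<Longrightarrow> colored N (expand R h k t)"
proof (induction R h k t rule: expand.induct)
  case (1 R h k c ts)
  show ?case
  proof (cases "k < root_level R h (Node c ts)")
    case True
    with 1 show ?thesis by (auto simp: expand_stretch colored_Node)
  next
    case False
    with 1 show ?thesis by (auto simp: expand_branch colored_Node comp_def)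
  qed
qed

definition admissible_levels :: "(nat list \<Rightarrow> nat) \<Rightarrow> nat \<Rightarrow> ctree \<Rightarrow> bool" where
  "admissible_levels R h t \<longleftrightarrow> (\<forall>v\<in>inner_verts t. R v < h) \<and>
     (\<forall>v i. v @ [i] \<in> inner_verts t \<longrightarrow> R v < R (v @ [i]))"

lemma admissible_levels_child:
  assumes adm: "admissible_levels R h (Node c ts)" and i: "i < length ts"
  shows "admissible_levels (R \<circ> (#) i) h (ts ! i)"
  unfolding admissible_levels_def
proof (intro conjI ballI allI impI)
  fix v assume "v \<in> inner_verts (ts ! i)"
  then have "i # v \<in> inner_verts (Node c ts)" using i by simp
  then show "(R \<circ> (#) i) v < h" using adm by (simp add: admissible_levels_def)
next
  fix v j assume "v @ [j] \<in> inner_verts (ts ! i)"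
  then have "(i # v) @ [j] \<in> inner_verts (Node c ts)" using i by simp
  then show "(R \<circ> (#) i) v < (R \<circ> (#) i) (v @ [j])"
    using adm unfolding admissible_levels_def by fastforce
qed

lemma root_below_leaves:
  assumes "admissible_levels R h t" "\<not> is_leaf t []"
  shows "R [] < h"
  using assms by (simp add: admissible_levels_def inner_verts_def)

lemma root_level_le: "admissible_levels R h t \<Longrightarrow> root_level R h t \<le> h"
  using root_below_leaves[of R h t] by (cases t) (auto simp: root_level_def)

lemma root_level_child:
  assumes adm: "admissible_levels R h (Node c ts)" and i: "i < length ts"
  shows "R [] < root_level (R \<circ> (#) i) h (ts ! i)"
proof (cases "kids (ts ! i) = []")
  case True
  moreover have "ts \<noteq> []" using i by auto
  ultimately show ?thesis using root_below_leaves[OF adm] by (simp add: root_level_def)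
next
  case False
  with i have "[] @ [i] \<in> inner_verts (Node c ts)"
    by (cases "ts ! i") (simp add: inner_verts_def)
  then have "R [] < R ([] @ [i])"
    using adm unfolding admissible_levels_def by blast
  with False show ?thesis by (simp add: root_level_def)
qed

lemma leaves_at_expand:
  "admissible_levels R h t \<Longrightarrow> k \<le> root_level R h t \<Longrightarrow> leaves_at (h - k) (expand R h k t)"
proof (induction R h k t rule: expand.induct)
  case (1 R h k c ts)
  have "root_level R h (Node c ts) \<le> h"
    using "1.prems"(1) by (rule root_level_le)
  show ?case
  proof (cases "k < root_level R h (Node c ts)")
    case True
    with 1 \<open>root_level R h (Node c ts) \<le> h\<close> show ?thesis
      by (auto simp: expand_stretch leaves_at_Node Suc_diff_Suc)
  next
    case False
    with "1.prems"(2) have k: "k = root_level R h (Node c ts)" by simp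
    show ?thesis
    proof (cases "ts = []")
      case True
      with False k show ?thesis by (simp add: expand_branch leaves_at_Node root_level_def)
    next
      case nonleaf: False
      with k have "k = R []" by (simp add: root_level_def)
      have "leaves_at (h - Suc k) (expand (R \<circ> (#) i) h (Suc k) (ts ! i))" if "i < length ts" for i
        using "1.IH"(2)[OF False, of i] admissible_levels_child[OF "1.prems"(1) that]
          root_level_child[OF "1.prems"(1) that] \<open>k = R []\<close> that by (simp add: comp_def)
      moreover have "R [] < h"
        using root_below_leaves[OF "1.prems"(1)] nonleaf by simp
      ultimately show ?thesis
        using False nonleaf \<open>k = R []\<close> by (auto simp: expand_branch leaves_at_Node)
    qed
  qed
qed

lemma levels_expand:
  "admissible_levels R h t \<Longrightarrow> k \<le> root_level R h t \<Longrightarrow> reduced t \<Longrightarrow>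
     p \<in> nondeg_verts (expand R h k t) \<Longrightarrow> k + length p = R (contract_path (expand R h k t) p)"
proof (induction R h k t arbitrary: p rule: expand.induct)
  case (1 R h k c ts)
  show ?case
  proof (cases "k < root_level R h (Node c ts)")
    case True
    with "1.prems"(4) obtain p' where "p = 0 # p'" "p' \<in> nondeg_verts (expand R h (Suc k) (Node c ts))"
      by (cases p) (auto simp: expand_stretch)
    with True "1.IH"(1)[of p'] "1.prems"(1,3) show ?thesis
      by (simp add: expand_stretch)
  next
    case False
    with "1.prems"(2) have k: "k = root_level R h (Node c ts)" by simp
    have "ts \<noteq> []"
      using False "1.prems"(4) by (cases p) (auto simp: expand_branch)
    with k have "k = R []" by (simp add: root_level_def)
    have "length ts \<noteq> 1"
      using "1.prems"(3) by (simp add: reduced_Node)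
    show ?thesis
    proof (cases p)
      case Nil
      with \<open>k = R []\<close> show ?thesis by simp
    next
      case (Cons i p')
      with False "1.prems"(4) have i: "i < length ts"
        and p': "p' \<in> nondeg_verts (expand (R \<circ> (#) i) h (Suc k) (ts ! i))"
        by (auto simp: expand_branch)
      have "Suc k + length p' = (R \<circ> (#) i) (contract_path (expand (R \<circ> (#) i) h (Suc k) (ts ! i)) p')"
        using "1.IH"(2)[OF False, of i p'] admissible_levels_child[OF "1.prems"(1) i]
          root_level_child[OF "1.prems"(1) i] "1.prems"(3) \<open>k = R []\<close> i p'
        by (simp add: comp_def reduced_Node)
      with Cons False i \<open>length ts \<noteq> 1\<close> show ?thesis
        by (simp add: expand_branch)
    qed
  qed
qed

lemma less_root_level_contract:
  assumes "k < h" and levels: "\<forall>p\<in>nondeg_verts s. Suc k + length p = R (contract_path s p)"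
  shows "k < root_level R h (contract s)"
proof (cases "kids (contract s) = []")
  case False
  then have "[] \<in> inner_verts (contract s)"
    by (cases "contract s") simp
  then obtain p where "p \<in> nondeg_verts s" "contract_path s p = []"
    using contract_path_image[of s] by (metis imageE)
  with levels False show ?thesis by (force simp: root_level_def)
qed (use assms in \<open>simp add: root_level_def\<close>)

lemma expand_contract:
  "colored N t \<Longrightarrow> leaves_at (h - k) t \<Longrightarrow>
     (\<forall>p\<in>nondeg_verts t. k + length p = R (contract_path t p)) \<Longrightarrow> expand R h k (contract t) = t"
proof (induction t arbitrary: R k)
  case (Node c ts)
  have child_levels: "Suc k + length p = R (contract_path (Node c ts) (i # p))"
    if "i < length ts" "p \<in> nondeg_verts (ts ! i)" for i p
  proof -
    have "i # p \<in> nondeg_verts (Node c ts)" using that by simp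
    with Node.prems(3) show ?thesis by fastforce
  qed
  show ?case
  proof (cases "length ts = 1")
    case True
    then obtain s where ts: "ts = [s]" by (cases ts) auto
    have s: "colored N s" "col s = c" "k < h" "leaves_at (h - Suc k) s"
      using Node.prems(1,2) ts by (auto simp: colored_Node leaves_at_Node)
    have levels: "\<forall>p\<in>nondeg_verts s. Suc k + length p = R (contract_path s p)"
      using child_levels[of 0] ts by simp
    with s have "k < root_level R h (contract s)"
      by (intro less_root_level_contract)
    with Node.IH[of s] s levels ts show ?thesis
      by (simp add: expand_stretch col_contract)
  next
    case False
    show ?thesis
    proof (cases "ts = []")
      case True
      with Node.prems(2) show ?thesis
        by (simp add: expand_branch leaves_at_Node root_level_def)
    next
      case nonleaf: False
      with False have "[] \<in> nondeg_verts (Node c ts)" by (simp add: two_le_length_iff)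
      with Node.prems(3) have "k = R []" by fastforce
      have "expand (R \<circ> (#) i) h (Suc k) (contract (ts ! i)) = ts ! i" if i: "i < length ts" for i
      proof (rule Node.IH)
        show "ts ! i \<in> set ts" "colored N (ts ! i)" "leaves_at (h - Suc k) (ts ! i)"
          using i nonleaf Node.prems(1,2) by (auto simp: colored_Node leaves_at_Node)
        show "\<forall>p\<in>nondeg_verts (ts ! i). Suc k + length p = (R \<circ> (#) i) (contract_path (ts ! i) p)"
          using child_levels[OF i] False by simp
      qed
      with nonleaf \<open>k = R []\<close> show ?thesis
        by (auto simp: contract_Node[OF False] expand_branch root_level_def intro: nth_equalityI)
    qed
  qed
qed

section \<open>Contraction is a bijection\<close>

definition ost_of :: "ctree \<Rightarrow> ctree" where
  "ost_of T = expand (rank_in (inner_verts T)) (nv T) 0 T"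

lemma admissible_levels_rank_in: "admissible_levels (rank_in (inner_verts T)) (nv T) T"
  unfolding admissible_levels_def nv_eq_card_inner_verts
proof (intro conjI ballI allI impI)
  fix v assume "v \<in> inner_verts T"
  then show "rank_in (inner_verts T) v < card (inner_verts T)"
    by (simp add: rank_in_less_card finite_inner_verts)
next
  fix v i assume vi: "v @ [i] \<in> inner_verts T"
  then have "v \<in> inner_verts T"
    by (intro prefix_in_inner_verts[of v "[i]"]) (auto simp: inner_verts_def)
  with vi show "rank_in (inner_verts T) v < rank_in (inner_verts T) (v @ [i])"
    by (intro strict_mono_onD[OF strict_mono_on_rank_in[OF finite_inner_verts]])
       (auto simp: less_append_nonempty)
qed

lemma contract_ost_of: "reduced T \<Longrightarrow> contract (ost_of T) = T"
  by (simp add: ost_of_def contract_expand)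

lemma colored_ost_of: "colored N T \<Longrightarrow> colored N (ost_of T)"
  by (simp add: ost_of_def colored_expand)

lemma leaves_at_ost_of: "leaves_at (nv T) (ost_of T)"
  using leaves_at_expand[OF admissible_levels_rank_in, of 0] by (simp add: ost_of_def)

lemma levels_by_rank_ost_of:
  assumes "reduced T"
  shows "levels_by_rank (ost_of T)"
proof -
  let ?t = "ost_of T"
  have contract: "contract ?t = T"
    using assms by (rule contract_ost_of)
  have "height ?t = card (nondeg_verts ?t)"
    using height_if_leaves_at[OF leaves_at_ost_of] contract by (simp add: card_nondeg_verts)
  moreover have "length p = rank_in (nondeg_verts ?t) p" if p: "p \<in> nondeg_verts ?t" for p
  proof -
    have "length p = rank_in (inner_verts T) (contract_path ?t p)"
      using levels_expand[OF admissible_levels_rank_in _ assms, of 0 p] p by (simp add: ost_of_def)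
    also have "\<dots> = rank_in (contract_path ?t ` nondeg_verts ?t) (contract_path ?t p)"
      by (simp add: contract_path_image contract)
    also have "\<dots> = rank_in (nondeg_verts ?t) p"
      using strict_mono_on_contract_path p by (rule rank_in_image_strict_mono)
    finally show ?thesis .
  qed
  ultimately show ?thesis
    by (simp add: levels_by_rank_def)
qed

lemma ost_of_contract:
  assumes "colored N t" "layered t" "levels_by_rank t"
  shows "ost_of (contract t) = t"
  unfolding ost_of_def
proof (rule expand_contract[OF assms(1)])
  show "leaves_at (nv (contract t) - 0) t"
    using assms(2,3) by (simp add: layered_iff_leaves_at_height levels_by_rank_def card_nondeg_verts)
  show "\<forall>p\<in>nondeg_verts t. 0 + length p = rank_in (inner_verts (contract t)) (contract_path t p)"
    using assms(3) rank_in_image_strict_mono[OF strict_mono_on_contract_path]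
    by (simp add: levels_by_rank_def contract_path_image[symmetric])
qed

lemma levels_by_rank_if_OST: "T \<in> OST N u j \<Longrightarrow> levels_by_rank T"
  by (simp add: OST_def levels_by_rank_if_orders_coincide orders_coincide_if_simple_order_reduced)

lemma contract_in_RT: "T \<in> OST N u j \<Longrightarrow> contract T \<in> RT N u j"
  using col_contract[of N T]
  by (simp add: OST_def RT_def colored_contract reduced_contract leafword_contract)

lemma ost_of_in_OST:
  assumes "T \<in> RT N u j"
  shows "ost_of T \<in> OST N u j"
proof -
  have T: "colored N T" "reduced T" "col T = j" "leafword T = u"
    using assms by (simp_all add: RT_def)
  have L: "layered (ost_of T)"
    using leaves_at_ost_of layered_if_leaves_at by blast
  moreover have P: "proper (ost_of T)" and "orders_coincide (ost_of T)"
    using T(2) levels_by_rank_ost_of proper_orders_coincide_if_levels_by_rank by blast+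
  then have "simple (ost_of T) \<and> order_reduced (ost_of T)"
    using orders_coincide_iff_simple_order_reduced[OF L P] by blast
  moreover have "leafword (ost_of T) = u"
    using leafword_contract[of "ost_of T"] T by (simp add: contract_ost_of)
  ultimately show ?thesis
    using T P colored_ost_of by (simp add: OST_def ost_of_def)
qed

lemma bij_betw_contract_OST_RT: "bij_betw contract (OST N u j) (RT N u j)"
proof (rule bij_betw_byWitness[where f' = ost_of])
  show "\<forall>T\<in>OST N u j. ost_of (contract T) = T"
    using ost_of_contract levels_by_rank_if_OST by (auto simp: OST_def)
  show "\<forall>T\<in>RT N u j. contract (ost_of T) = T"
    by (simp add: RT_def contract_ost_of)
qed (auto intro: contract_in_RT ost_of_in_OST)

section \<open>The products\<close>

lemma the_sorted_wrt_eq_rev_sorted_list_of_set: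
  fixes A :: "'a::linorder set"
  assumes "finite A" and R: "\<And>x y. x \<in> A \<Longrightarrow> y \<in> A \<Longrightarrow> R x y \<longleftrightarrow> y < x"
  shows "(THE xs. sorted_wrt R xs \<and> set xs = A) = rev (sorted_list_of_set A)"
proof (rule the_equality)
  have "sorted_wrt (\<lambda>x y. R y x) (sorted_list_of_set A)"
    by (rule sorted_wrt_mono_rel[OF _ strict_sorted_list_of_set]) (use assms in auto)
  then show "sorted_wrt R (rev (sorted_list_of_set A)) \<and> set (rev (sorted_list_of_set A)) = A"
    using assms by (simp add: sorted_wrt_rev)
next
  fix xs assume xs: "sorted_wrt R xs \<and> set xs = A"
  then have "sorted_wrt (<) (rev xs)"
    by (auto simp: sorted_wrt_rev R intro: sorted_wrt_mono_rel[of xs R])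
  with xs assms have "rev xs = sorted_list_of_set A"
    by (intro strict_sorted_equal) simp_all
  then show "xs = rev (sorted_list_of_set A)" by (metis rev_rev_ident)
qed

lemma map_sorted_list_of_set_strict_mono:
  assumes "finite A" "strict_mono_on A f"
  shows "map f (sorted_list_of_set A) = sorted_list_of_set (f ` A)"
proof (rule strict_sorted_equal)
  show "sorted_wrt (<) (map f (sorted_list_of_set A))"
    by (rule sorted_wrt_map_mono[OF strict_sorted_list_of_set])
       (use assms in \<open>auto intro: strict_mono_onD\<close>)
qed (use assms in auto)

lemma Omega_eq_Lambda_r_contract:
  assumes "colored N t" "orders_coincide t"
  shows "Omega t = Lambda_r (contract t)"
proof -
  let ?xs = "sorted_list_of_set (nondeg_verts t)"
  have "Omega t = hprod (map (Yv t) (rev ?xs))"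
    using assms(2) the_sorted_wrt_eq_rev_sorted_list_of_set[OF finite_nondeg_verts]
    by (simp add: Omega_def orders_coincide_def r_less_iff_less nondeg_verts_def[symmetric])
  also have "\<dots> = hprod (map (Yv (contract t)) (map (contract_path t) (rev ?xs)))"
    unfolding map_map
    by (intro arg_cong[where f = hprod] map_cong)
       (simp_all add: finite_nondeg_verts Yv_contract_path[OF assms(1)])
  also have "map (contract_path t) (rev ?xs) = rev (sorted_list_of_set (inner_verts (contract t)))"
    using map_sorted_list_of_set_strict_mono[OF finite_nondeg_verts strict_mono_on_contract_path]
    by (simp add: rev_map[symmetric] contract_path_image)
  also have "hprod (map (Yv (contract t)) (rev (sorted_list_of_set (inner_verts (contract t)))))
      = Lambda_r (contract t)"
    using the_sorted_wrt_eq_rev_sorted_list_of_set[OF finite_inner_verts]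
    by (simp add: Lambda_r_def r_less_iff_less inner_verts_def[symmetric])
  finally show ?thesis .
qed

lemma nlayers_eq_nv_contract: "levels_by_rank t \<Longrightarrow> nlayers t = nv (contract t)"
  by (simp add: levels_by_rank_def nlayers_def card_nondeg_verts)

theorem theorem10:
  fixes N :: nat
  assumes "N \<ge> 1"
  shows "(\<forall>T. colored N T \<and> layered T \<and> proper T \<longrightarrow>
            ((\<forall>x\<in>verts T. \<forall>y\<in>verts T. nondeg T x \<and> nondeg T y \<longrightarrow>
                 (bfs_less x y \<longleftrightarrow> r_less x y))
             \<longleftrightarrow> simple T \<and> order_reduced T))
       \<and> (\<forall>j u. j \<in> {1..N} \<and> set u \<subseteq> {1..N} \<longrightarrow>
            bij_betw contract (OST N u j) (RT N u j))
       \<and> (\<forall>j u T T'. j \<in> {1..N} \<and> set u \<subseteq> {1..N} \<and> T \<in> RT N u j \<and>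
            T' \<in> OST N u j \<and> contract T' = T \<longrightarrow>
            Omega T' = Lambda_r T \<and> nlayers T' = nv T)"
proof (intro conjI allI impI)
  fix T assume "colored N T \<and> layered T \<and> proper T"
  moreover have "orders_coincide T \<longleftrightarrow>
      (\<forall>x\<in>verts T. \<forall>y\<in>verts T. nondeg T x \<and> nondeg T y \<longrightarrow> (bfs_less x y \<longleftrightarrow> r_less x y))"
    by (auto simp: orders_coincide_def nondeg_verts_def)
  ultimately show "(\<forall>x\<in>verts T. \<forall>y\<in>verts T. nondeg T x \<and> nondeg T y \<longrightarrow>
      (bfs_less x y \<longleftrightarrow> r_less x y)) \<longleftrightarrow> simple T \<and> order_reduced T"
    using orders_coincide_iff_simple_order_reduced by blast
next
  fix j u
  show "bij_betw contract (OST N u j) (RT N u j)"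
    by (rule bij_betw_contract_OST_RT)
next
  fix j u T T'
  assume "j \<in> {1..N} \<and> set u \<subseteq> {1..N} \<and> T \<in> RT N u j \<and> T' \<in> OST N u j \<and> contract T' = T"
  then have T': "T' \<in> OST N u j" and T: "T = contract T'" by simp_all
  then have "colored N T'" "orders_coincide T'"
    by (simp_all add: OST_def orders_coincide_if_simple_order_reduced)
  with T' T show "Omega T' = Lambda_r T" "nlayers T' = nv T"
    by (simp_all add: Omega_eq_Lambda_r_contract nlayers_eq_nv_contract levels_by_rank_if_OST)
qed

end
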